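(* One can write, for $\theta>0$, \[f(\theta)=-\theta\ln\theta+f_0(\theta),\qquad j(\theta)=-\tfrac12\ln\theta+j_0(\theta),\] where $f_0$ and $j_0$ are real-analytic on $(0,\infty)$ and extend to real-analytic functions on a neighbourhood of $0$. Moreover \[f_0(0)=\ln 4,\qquad \exp\big(f_0'(0)\big)=\frac{e}{3},\qquad j_0(0)=0.\] Finally, for every integer $k\ge1$, as $\theta\to0^+$, \[f^{(k+1)}(\theta)=O(\theta^{-k}),\qquad j^{(k)}(\theta)=O(\theta^{-k}).\]
   Context: Define $\lambda:[0,\infty)\to(0,1/4]$ by $\lambda(0)=1/4$ and, for $\theta>0$, $\lambda(\theta)$ is the unique $\lambda\in(0,1/4)$ with $-1+\frac{\operatorname{artanh}(\sqrt{1-4\lambda})}{\sqrt{1-4\lambda}}=\theta$. For $\theta>0$ set $f(\theta)=-\ln\lambda(\theta)-2\theta-\theta\ln\big(1-4\lambda(\theta)\big)$ and $j(\theta)=-\tfrac12\ln\big(1-4(\theta+1)\lambda(\theta)\big)+\tfrac12\ln 2$. Superscripts $(k)$ denote $k$-th derivatives in $\theta$. *)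

theory Defs
  imports "HOL-Analysis.Analysis" "HOL-Library.Landau_Symbols"
begin

definition real_analytic_on :: "(real \<Rightarrow> real) \<Rightarrow> real set \<Rightarrow> bool" where
  "real_analytic_on g S \<longleftrightarrow>
     (\<forall>x\<in>S. \<exists>r>0. \<exists>a::nat \<Rightarrow> real. \<forall>y. \<bar>y - x\<bar> < r \<longrightarrow> (\<lambda>n. a n * (y - x) ^ n) sums g y)"

definition lam :: "real \<Rightarrow> real" where
  "lam \<theta> = (if \<theta> = 0 then 1/4 else
     (THE l. 0 < l \<and> l < 1/4 \<and> -1 + artanh (sqrt (1 - 4*l)) / sqrt (1 - 4*l) = \<theta>))"

definition fF :: "real \<Rightarrow> real" where
  "fF \<theta> = - ln (lam \<theta>) - 2*\<theta> - \<theta> * ln (1 - 4 * lam \<theta>)"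

definition jF :: "real \<Rightarrow> real" where
  "jF \<theta> = - (1/2) * ln (1 - 4 * (\<theta> + 1) * lam \<theta>) + (1/2) * ln 2"

end

theory Submission
  imports Defs "HOL-Complex_Analysis.Complex_Analysis"
begin

(* With u = 1 - 4 lambda = s^2 the equation defining lambda(theta) becomes
   theta = artanh s / s - 1 = u H(u), where H(u) = sum_n u^n / (2n + 3) is analytic on the unit
   disc and H(0) = 1/3. So u = U(theta) for the analytic local inverse U of u H(u), with U(0) = 0
   and U'(0) = 3. Substituting ln u = ln theta - ln H(u) and
   1 - 4 (theta + 1) lambda = theta (1 / H(u) - 1 + u) splits off the singular parts
   -theta ln theta of f and -(1/2) ln theta of j; the remainders f0 and j0 are analytic at 0, so
   their derivatives stay bounded as theta -> 0+, while the derivatives of theta ln theta and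
   ln theta are explicit multiples of powers of 1/theta. Analyticity is handled through
   holomorphic extensions, which are preserved by arithmetic, composition and local inversion. *)

section \<open>Real functions with a holomorphic extension\<close>

definition has_holomorphic_extension :: "(real \<Rightarrow> real) \<Rightarrow> real \<Rightarrow> bool" where
  "has_holomorphic_extension f x \<longleftrightarrow> (\<exists>r>0. \<exists>F. F holomorphic_on ball (complex_of_real x) r \<and>
      (\<forall>y. \<bar>y - x\<bar> < r \<longrightarrow> F (of_real y) = of_real (f y)))"

lemma has_holomorphic_extension_imp_real_analytic:
  assumes "\<And>x. x \<in> S \<Longrightarrow> has_holomorphic_extension f x"
  shows "real_analytic_on f S"
  unfolding real_analytic_on_def
proof
  fix x assume "x \<in> S"
  then obtain r F where r: "r > 0" and F: "F holomorphic_on ball (complex_of_real x) r"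
    and ext: "\<And>y. \<bar>y - x\<bar> < r \<Longrightarrow> F (of_real y) = of_real (f y)"
    using assms unfolding has_holomorphic_extension_def by blast
  define c where "c n = (deriv ^^ n) F (of_real x) / fact n" for n
  have "(\<lambda>n. Re (c n) * (y - x) ^ n) sums f y" if y: "\<bar>y - x\<bar> < r" for y
  proof -
    have "(\<lambda>n. Re (c n) * (y - x) ^ n) = (\<lambda>n. Re (c n * (of_real y - of_real x) ^ n))"
      by (simp flip: of_real_diff of_real_power)
    also have "\<dots> sums Re (F (of_real y))"
      using holomorphic_power_series[OF F, of "of_real y"] y
      by (intro sums_Re) (simp add: c_def dist_real_def abs_minus_commute)
    also have "Re (F (of_real y)) = f y"
      using ext[OF y] by simp
    finally show ?thesis .
  qed
  then show "\<exists>r>0. \<exists>a. \<forall>y. \<bar>y - x\<bar> < r \<longrightarrow> (\<lambda>n. a n * (y - x) ^ n) sums f y"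
    using r by (intro exI[of _ r] conjI exI[of _ "\<lambda>n. Re (c n)"] allI impI) auto
qed

lemma holomorphic_extension_has_real_derivative:
  assumes F: "F holomorphic_on ball (complex_of_real x) r"
    and ext: "\<And>y. \<bar>y - x\<bar> < r \<Longrightarrow> F (of_real y) = of_real (f y)"
    and y: "\<bar>y - x\<bar> < r"
  shows "(f has_real_derivative Re (deriv F (of_real y))) (at y)"
    and "deriv F (of_real y) = of_real (Re (deriv F (of_real y)))"
proof -
  have "(F has_field_derivative deriv F (of_real y)) (at (of_real y))"
    using F y by (intro holomorphic_derivI[of F "ball (complex_of_real x) r"])
       (auto simp: dist_real_def abs_minus_commute)
  then have "((\<lambda>t. F (of_real t)) has_vector_derivative deriv F (of_real y)) (at y)"
    by (rule has_vector_derivative_real_field)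
  then have d: "((\<lambda>t. complex_of_real (f t)) has_vector_derivative deriv F (of_real y)) (at y)"
    by (rule has_vector_derivative_transform_within_open[where S="{x-r<..<x+r}"])
       (use y ext in \<open>auto simp: abs_less_iff\<close>)
  then show "(f has_real_derivative Re (deriv F (of_real y))) (at y)"
    by (simp add: has_vector_derivative_complex_iff)
  have "((\<lambda>t. 0::real) has_real_derivative Im (deriv F (of_real y))) (at y)"
    using d by (simp add: has_vector_derivative_complex_iff)
  then have "Im (deriv F (of_real y)) = 0"
    using DERIV_const DERIV_unique by blast
  then show "deriv F (of_real y) = of_real (Re (deriv F (of_real y)))"
    by (simp add: complex_eq_iff)
qed

lemma has_holomorphic_extension_DERIV:
  assumes "has_holomorphic_extension f x" shows "(f has_real_derivative deriv f x) (at x)"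
proof -
  obtain r F where "r > 0" and F: "F holomorphic_on ball (complex_of_real x) r"
    and ext: "\<And>y. \<bar>y - x\<bar> < r \<Longrightarrow> F (of_real y) = of_real (f y)"
    using assms unfolding has_holomorphic_extension_def by blast
  then have "(f has_real_derivative Re (deriv F (of_real x))) (at x)"
    using holomorphic_extension_has_real_derivative(1)[OF F ext, of x] by simp
  then show ?thesis using DERIV_imp_deriv by metis
qed

lemma has_holomorphic_extension_isCont: "has_holomorphic_extension f x \<Longrightarrow> isCont f x"
  using has_holomorphic_extension_DERIV DERIV_isCont by blast

lemma has_holomorphic_extension_deriv:
  assumes "has_holomorphic_extension f x" shows "has_holomorphic_extension (deriv f) x"
proof -
  obtain r F where r: "r > 0" and F: "F holomorphic_on ball (complex_of_real x) r"
    and ext: "\<And>y. \<bar>y - x\<bar> < r \<Longrightarrow> F (of_real y) = of_real (f y)"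
    using assms unfolding has_holomorphic_extension_def by blast
  have "deriv F holomorphic_on ball (complex_of_real x) r"
    using F by (rule holomorphic_deriv) simp
  moreover have "deriv F (of_real y) = of_real (deriv f y)" if "\<bar>y - x\<bar> < r" for y
    using holomorphic_extension_has_real_derivative[OF F ext that] DERIV_imp_deriv by metis
  ultimately show ?thesis using r unfolding has_holomorphic_extension_def by blast
qed

lemma has_holomorphic_extension_higher_deriv:
  "has_holomorphic_extension f x \<Longrightarrow> has_holomorphic_extension ((deriv ^^ n) f) x"
  by (induction n) (auto intro: has_holomorphic_extension_deriv)

lemma has_holomorphic_extension_eventually:
  assumes "has_holomorphic_extension f x"
  shows "\<forall>\<^sub>F y in nhds x. has_holomorphic_extension f y"
proof -
  obtain r F where r: "r > 0" and F: "F holomorphic_on ball (complex_of_real x) r"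
    and ext: "\<And>y. \<bar>y - x\<bar> < r \<Longrightarrow> F (of_real y) = of_real (f y)"
    using assms unfolding has_holomorphic_extension_def by blast
  have *: "has_holomorphic_extension f y" if y: "y \<in> ball x r" for y
  proof -
    define r' where "r' = r - dist x y"
    have r': "r' > 0" using y by (simp add: r'_def)
    have "ball (complex_of_real y) r' \<subseteq> ball (of_real x) r"
    proof
      fix z assume "z \<in> ball (complex_of_real y) r'"
      then show "z \<in> ball (of_real x) r"
        using dist_triangle[of "of_real x" z "of_real y"] by (simp add: r'_def)
    qed
    with F have "F holomorphic_on ball (complex_of_real y) r'"
      by (rule holomorphic_on_subset)
    moreover have "F (of_real z) = of_real (f z)" if "\<bar>z - y\<bar> < r'" for z
      using that ext[of z] unfolding r'_def dist_real_def by (smt (verit))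
    ultimately show ?thesis using r' unfolding has_holomorphic_extension_def by blast
  qed
  have "\<forall>\<^sub>F y in nhds x. y \<in> ball x r"
    using r by (intro eventually_nhds_in_open) auto
  then show ?thesis by (rule eventually_mono) (rule *)
qed

lemma has_holomorphic_extension_const: "has_holomorphic_extension (\<lambda>_. c) x"
  unfolding has_holomorphic_extension_def by (rule exI[of _ 1]) (auto intro!: exI[of _ "\<lambda>_. of_real c"])

lemma has_holomorphic_extension_id: "has_holomorphic_extension (\<lambda>t. t) x"
  unfolding has_holomorphic_extension_def by (rule exI[of _ 1]) (auto intro!: exI[of _ "\<lambda>z. z"])

lemma has_holomorphic_extension_binop:
  assumes "has_holomorphic_extension f x" "has_holomorphic_extension g x"
    and holo: "\<And>F G S. F holomorphic_on S \<Longrightarrow> G holomorphic_on S \<Longrightarrow> (\<lambda>z. P (F z) (G z)) holomorphic_on S"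
    and real: "\<And>a b. P (complex_of_real a) (of_real b) = of_real (Q a b)"
  shows "has_holomorphic_extension (\<lambda>t. Q (f t) (g t)) x"
proof -
  obtain r F where r: "r > 0" and F: "F holomorphic_on ball (complex_of_real x) r"
    and ext: "\<And>y. \<bar>y - x\<bar> < r \<Longrightarrow> F (of_real y) = of_real (f y)"
    using assms unfolding has_holomorphic_extension_def by blast
  obtain r' G where r': "r' > 0" and G: "G holomorphic_on ball (complex_of_real x) r'"
    and ext': "\<And>y. \<bar>y - x\<bar> < r' \<Longrightarrow> G (of_real y) = of_real (g y)"
    using assms unfolding has_holomorphic_extension_def by blast
  have "F holomorphic_on ball (complex_of_real x) (min r r')"
    using F by (rule holomorphic_on_subset) auto
  moreover have "G holomorphic_on ball (complex_of_real x) (min r r')"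
    using G by (rule holomorphic_on_subset) auto
  ultimately have "(\<lambda>z. P (F z) (G z)) holomorphic_on ball (complex_of_real x) (min r r')"
    by (rule holo)
  then show ?thesis unfolding has_holomorphic_extension_def using r r' ext ext' real
    by (intro exI[of _ "min r r'"]) auto
qed

lemma has_holomorphic_extension_add:
  "has_holomorphic_extension f x \<Longrightarrow> has_holomorphic_extension g x \<Longrightarrow>
   has_holomorphic_extension (\<lambda>t. f t + g t) x"
  by (rule has_holomorphic_extension_binop[where P="(+)"]) (auto intro: holomorphic_intros)

lemma has_holomorphic_extension_diff:
  "has_holomorphic_extension f x \<Longrightarrow> has_holomorphic_extension g x \<Longrightarrow>
   has_holomorphic_extension (\<lambda>t. f t - g t) x"
  by (rule has_holomorphic_extension_binop[where P="(-)"]) (auto intro: holomorphic_intros)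

lemma has_holomorphic_extension_mult:
  "has_holomorphic_extension f x \<Longrightarrow> has_holomorphic_extension g x \<Longrightarrow>
   has_holomorphic_extension (\<lambda>t. f t * g t) x"
  by (rule has_holomorphic_extension_binop[where P="(*)"]) (auto intro: holomorphic_intros)

lemma has_holomorphic_extension_compose:
  assumes g: "has_holomorphic_extension g x" and f: "has_holomorphic_extension f (g x)"
  shows "has_holomorphic_extension (\<lambda>t. f (g t)) x"
proof -
  obtain r G where r: "r > 0" and G: "G holomorphic_on ball (complex_of_real x) r"
    and ext: "\<And>y. \<bar>y - x\<bar> < r \<Longrightarrow> G (of_real y) = of_real (g y)"
    using g unfolding has_holomorphic_extension_def by blast
  obtain r' F where r': "r' > 0" and F: "F holomorphic_on ball (complex_of_real (g x)) r'"
    and ext': "\<And>y. \<bar>y - g x\<bar> < r' \<Longrightarrow> F (of_real y) = of_real (f y)"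
    using f unfolding has_holomorphic_extension_def by blast
  have "continuous_on (ball (complex_of_real x) r) G"
    using G holomorphic_on_imp_continuous_on by blast
  then obtain d where d: "d > 0" and close: "\<And>z. z \<in> ball (complex_of_real x) r \<Longrightarrow>
      dist z (of_real x) < d \<Longrightarrow> dist (G z) (G (of_real x)) < r'"
    using r r' unfolding continuous_on_iff by (metis centre_in_ball)
  define \<delta> where "\<delta> = min r d"
  have Gx: "G (of_real x) = of_real (g x)" using ext r by simp
  have maps: "G ` ball (complex_of_real x) \<delta> \<subseteq> ball (complex_of_real (g x)) r'"
    using close Gx by (auto simp: \<delta>_def dist_commute)
  have "G holomorphic_on ball (complex_of_real x) \<delta>"
    using G by (rule holomorphic_on_subset) (auto simp: \<delta>_def)
  then have "(F \<circ> G) holomorphic_on ball (complex_of_real x) \<delta>"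
    using holomorphic_on_compose_gen[OF _ F maps] by blast
  moreover have "(F \<circ> G) (of_real y) = of_real (f (g y))" if y: "\<bar>y - x\<bar> < \<delta>" for y
  proof -
    have Gy: "G (of_real y) = of_real (g y)" using ext y by (simp add: \<delta>_def)
    have "complex_of_real y \<in> ball (of_real x) \<delta>" using y by (simp add: dist_real_def abs_minus_commute)
    then have "G (of_real y) \<in> ball (complex_of_real (g x)) r'" using maps by blast
    then have "\<bar>g y - g x\<bar> < r'" by (simp add: Gy dist_real_def abs_minus_commute)
    then show ?thesis using ext' Gy by simp
  qed
  ultimately show ?thesis unfolding has_holomorphic_extension_def using r d
    by (intro exI[of _ \<delta>]) (auto simp: \<delta>_def)
qed

lemma has_holomorphic_extension_ln:
  assumes "has_holomorphic_extension f x" "f x > 0"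
  shows "has_holomorphic_extension (\<lambda>t. ln (f t)) x"
proof (rule has_holomorphic_extension_compose[OF assms(1)])
  define c where "c = f x"
  have "z \<notin> \<real>\<^sub>\<le>\<^sub>0" if "z \<in> ball (complex_of_real c) c" for z
  proof
    assume "z \<in> \<real>\<^sub>\<le>\<^sub>0"
    then obtain t where "t \<le> 0" "z = of_real t" by (auto elim: nonpos_Reals_cases)
    with that show False by (simp add: dist_real_def)
  qed
  then have "Ln holomorphic_on ball (complex_of_real c) c"
    by (intro holomorphic_on_Ln) blast
  moreover have "Ln (of_real y) = of_real (ln y)" if "\<bar>y - c\<bar> < c" for y
    using that by (intro Ln_of_real) linarith
  ultimately show "has_holomorphic_extension ln c"
    unfolding has_holomorphic_extension_def using assms(2) c_def by blast
qed

lemma has_holomorphic_extension_inverse: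
  assumes "has_holomorphic_extension f x" "f x \<noteq> 0"
  shows "has_holomorphic_extension (\<lambda>t. 1 / f t) x"
proof (rule has_holomorphic_extension_compose[OF assms(1)])
  have "(\<lambda>z. 1 / z) holomorphic_on ball (complex_of_real (f x)) \<bar>f x\<bar>"
    by (intro holomorphic_intros) (auto simp: dist_norm)
  then show "has_holomorphic_extension (\<lambda>t. 1 / t) (f x)"
    unfolding has_holomorphic_extension_def using assms(2) by (intro exI[of _ "\<bar>f x\<bar>"]) auto
qed

lemma holomorphic_local_inverse:
  assumes G: "G holomorphic_on ball z r" and "deriv G z \<noteq> 0" "0 < r"
  obtains r' \<rho> H where "0 < r'" "ball z r' \<subseteq> ball z r" "0 < \<rho>" "H holomorphic_on ball (G z) \<rho>"
    "\<And>w. w \<in> ball z r' \<Longrightarrow> H (G w) = w"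
proof -
  obtain r' where r': "0 < r'" "ball z r' \<subseteq> ball z r" "inj_on G (ball z r')"
    using has_complex_derivative_locally_injective[OF G _ open_ball] assms(2,3) by (metis centre_in_ball)
  have G': "G holomorphic_on ball z r'"
    using G r'(2) by (rule holomorphic_on_subset)
  obtain H where H: "H holomorphic_on G ` ball z r'" and HG: "\<And>w. w \<in> ball z r' \<Longrightarrow> H (G w) = w"
    by (rule holomorphic_has_inverse[OF G' open_ball r'(3)]) blast
  have "open (G ` ball z r')" "G z \<in> G ` ball z r'"
    using open_mapping_thm3[OF G' open_ball r'(3)] r'(1) by auto
  then obtain \<rho> where \<rho>: "0 < \<rho>" "ball (G z) \<rho> \<subseteq> G ` ball z r'"
    using open_contains_ball by blast
  have "H holomorphic_on ball (G z) \<rho>"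
    using H \<rho>(2) by (rule holomorphic_on_subset)
  then show ?thesis using that r'(1,2) \<rho>(1) HG by blast
qed

lemma has_holomorphic_extension_inverse_fun:
  assumes g: "has_holomorphic_extension g x" and "deriv g x \<noteq> 0"
    and cont: "isCont h (g x)" and hg: "h (g x) = x"
    and "e > 0" and gh: "\<And>y. \<bar>y - g x\<bar> < e \<Longrightarrow> g (h y) = y"
  shows "has_holomorphic_extension h (g x)"
proof -
  obtain r G where r: "r > 0" and G: "G holomorphic_on ball (complex_of_real x) r"
    and ext: "\<And>y. \<bar>y - x\<bar> < r \<Longrightarrow> G (of_real y) = of_real (g y)"
    using g unfolding has_holomorphic_extension_def by blast
  have "deriv g x = Re (deriv G (of_real x))"
    using holomorphic_extension_has_real_derivative(1)[OF G ext, of x] r DERIV_imp_deriv by force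
  then have "deriv G (of_real x) \<noteq> 0"
    using holomorphic_extension_has_real_derivative(2)[OF G ext, of x] r \<open>deriv g x \<noteq> 0\<close> by auto
  then obtain r' \<rho> H where r': "0 < r'" "ball (complex_of_real x) r' \<subseteq> ball (of_real x) r"
    and \<rho>: "0 < \<rho>" and H: "H holomorphic_on ball (G (of_real x)) \<rho>"
    and HG: "\<And>w. w \<in> ball (complex_of_real x) r' \<Longrightarrow> H (G w) = w"
    using holomorphic_local_inverse[OF G _ r] by blast
  have Gx: "G (of_real x) = of_real (g x)" using ext r by simp
  obtain \<eta> where \<eta>: "\<eta> > 0" "\<And>y. dist y (g x) < \<eta> \<Longrightarrow> dist (h y) (h (g x)) < min r r'"
    using cont r r' unfolding continuous_at_eps_delta by (metis min_less_iff_conj)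
  define \<sigma> where "\<sigma> = min \<rho> (min \<eta> e)"
  have "H holomorphic_on ball (complex_of_real (g x)) \<sigma>"
    using H unfolding Gx by (rule holomorphic_on_subset) (auto simp: \<sigma>_def)
  moreover have "H (of_real y) = of_real (h y)" if y: "\<bar>y - g x\<bar> < \<sigma>" for y
  proof -
    have "\<bar>h y - x\<bar> < min r r'" using \<eta>(2)[of y] y hg by (auto simp: \<sigma>_def dist_real_def)
    then have "of_real (h y) \<in> ball (complex_of_real x) r'" "G (of_real (h y)) = of_real y"
      using ext[of "h y"] gh[of y] y by (auto simp: \<sigma>_def dist_real_def abs_minus_commute)
    then show ?thesis using HG by metis
  qed
  ultimately show ?thesis unfolding has_holomorphic_extension_def using \<rho> \<eta> \<open>e > 0\<close>
    by (intro exI[of _ \<sigma>]) (auto simp: \<sigma>_def)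
qed

lemma isCont_pos_eventually:
  fixes f :: "real \<Rightarrow> real"
  assumes "isCont f x" "0 < f x"
  shows "\<forall>\<^sub>F y in nhds x. 0 < f y"
  using assms by (metis order_tendstoD(1) continuous_within tendsto_nhds_iff)

section \<open>Logarithmic singularities\<close>

lemma higher_deriv_add_real:
  assumes "has_holomorphic_extension f x" "has_holomorphic_extension g x"
  shows "(deriv ^^ n) (\<lambda>t. f t + g t) x = (deriv ^^ n) f x + (deriv ^^ n) g x"
  using assms
proof (induction n arbitrary: x)
  case 0 then show ?case by simp
next
  case (Suc n)
  have "\<forall>\<^sub>F y in nhds x. has_holomorphic_extension f y \<and> has_holomorphic_extension g y"
    using Suc.prems by (intro eventually_conj has_holomorphic_extension_eventually)
  then have "\<forall>\<^sub>F y in nhds x. (deriv ^^ n) (\<lambda>t. f t + g t) y = (deriv ^^ n) f y + (deriv ^^ n) g y"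
    by (rule eventually_mono) (use Suc.IH in blast)
  then have "(deriv ^^ Suc n) (\<lambda>t. f t + g t) x = deriv (\<lambda>t. (deriv ^^ n) f t + (deriv ^^ n) g t) x"
    by (simp add: deriv_cong_ev)
  also have "\<dots> = deriv ((deriv ^^ n) f) x + deriv ((deriv ^^ n) g) x"
    using Suc.prems
    by (intro DERIV_imp_deriv DERIV_add has_holomorphic_extension_DERIV has_holomorphic_extension_higher_deriv)
  finally show ?case by simp
qed

lemma DERIV_divide_power:
  fixes t K :: real
  assumes "t \<noteq> 0"
  shows "((\<lambda>y. K / y ^ m) has_real_derivative - (K * real m / t ^ Suc m)) (at t)"
proof (cases m)
  case 0
  then show ?thesis by simp
next
  case (Suc n)
  then show ?thesis using assms
    by (auto intro!: derivative_eq_intros simp del: power_Suc simp: field_simps simp flip: power_add)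
qed

lemma higher_deriv_ln:
  fixes t c :: real
  assumes "t > 0"
  shows "(deriv ^^ Suc n) (\<lambda>t. c * ln t) t = c * (-1) ^ n * fact n / t ^ Suc n"
  using assms
proof (induction n arbitrary: t)
  case 0
  have "((\<lambda>t. c * ln t) has_real_derivative c / t) (at t)"
    using 0 by (auto intro!: derivative_eq_intros)
  then show ?case by (simp add: DERIV_imp_deriv)
next
  case (Suc n)
  have "\<forall>\<^sub>F y in nhds t. y \<in> {0<..}"
    using Suc.prems by (intro eventually_nhds_in_open) auto
  then have "\<forall>\<^sub>F y in nhds t. (deriv ^^ Suc n) (\<lambda>t. c * ln t) y = c * (-1) ^ n * fact n / y ^ Suc n"
    by (rule eventually_mono) (metis Suc.IH greaterThan_iff)
  then have "(deriv ^^ Suc (Suc n)) (\<lambda>t. c * ln t) t = deriv (\<lambda>y. c * (-1) ^ n * fact n / y ^ Suc n) t"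
    by (simp add: deriv_cong_ev)
  also have "\<dots> = c * (-1) ^ Suc n * fact (Suc n) / t ^ Suc (Suc n)"
    using DERIV_divide_power[of t "c * (-1) ^ n * fact n" "Suc n"] Suc.prems
    by (simp add: DERIV_imp_deriv)
  finally show ?case .
qed

lemma bigo_inverse_power_at_right_0:
  fixes F b :: "real \<Rightarrow> real"
  assumes eq: "\<And>\<theta>. 0 < \<theta> \<Longrightarrow> \<theta> < 1 \<Longrightarrow> F \<theta> = c / \<theta> ^ k + b \<theta>" and "isCont b 0"
  shows "F \<in> O[at_right 0](\<lambda>\<theta>. 1 / \<theta> ^ k)"
proof -
  have "b \<in> O[at_right 0](\<lambda>_. 1)"
    using \<open>isCont b 0\<close> by (intro continuous_imp_bigo_1) (simp add: continuous_at_imp_continuous_within)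
  moreover have "\<forall>\<^sub>F \<theta> in at_right (0::real). norm (1::real) \<le> 1 * norm (1 / \<theta> ^ k)"
    by (rule eventually_at_rightI[where b=1]) (simp_all add: power_le_one)
  then have "(\<lambda>_. 1) \<in> O[at_right 0](\<lambda>\<theta>. 1 / \<theta> ^ k :: real)"
    by (rule bigoI)
  ultimately have b: "b \<in> O[at_right 0](\<lambda>\<theta>. 1 / \<theta> ^ k)"
    by (rule landau_o.big_trans)
  have "(\<lambda>\<theta>. c / \<theta> ^ k) \<in> O[at_right 0](\<lambda>\<theta>. 1 / \<theta> ^ k)"
    by (intro bigoI[where c="\<bar>c\<bar>"] always_eventually allI) (simp add: abs_divide)
  from sum_in_bigo(1)[OF this b]
  have sum: "(\<lambda>\<theta>. c / \<theta> ^ k + b \<theta>) \<in> O[at_right 0](\<lambda>\<theta>. 1 / \<theta> ^ k)" .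
  have "\<forall>\<^sub>F \<theta> in at_right 0. c / \<theta> ^ k + b \<theta> = F \<theta>"
    by (rule eventually_at_rightI[where b=1]) (simp_all add: eq)
  from landau_o.big.in_cong[OF this] sum show ?thesis by simp
qed

lemma higher_deriv_log_singularity_bigo:
  fixes G g :: "real \<Rightarrow> real"
  assumes G: "\<And>\<theta>. 0 < \<theta> \<Longrightarrow> G \<theta> = c * ln \<theta> + g \<theta>"
    and g: "\<And>\<theta>. 0 \<le> \<theta> \<Longrightarrow> has_holomorphic_extension g \<theta>"
    and "1 \<le> k"
  shows "(deriv ^^ k) G \<in> O[at_right 0](\<lambda>\<theta>. 1 / \<theta> ^ k)"
proof -
  obtain n where k: "k = Suc n" using \<open>1 \<le> k\<close> by (cases k) auto
  show ?thesis
  proof (rule bigo_inverse_power_at_right_0)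
    show "isCont ((deriv ^^ k) g) 0"
      using g by (intro has_holomorphic_extension_isCont has_holomorphic_extension_higher_deriv) simp
    fix \<theta> :: real assume \<theta>: "0 < \<theta>" "\<theta> < 1"
    have "\<forall>\<^sub>F t in nhds \<theta>. t \<in> {0<..}"
      using \<theta> by (intro eventually_nhds_in_open) auto
    then have "\<forall>\<^sub>F t in nhds \<theta>. G t = c * ln t + g t"
      by (rule eventually_mono) (simp add: G)
    then have "(deriv ^^ k) G \<theta> = (deriv ^^ k) (\<lambda>t. c * ln t + g t) \<theta>"
      by (rule higher_deriv_cong_ev) simp
    also have "\<dots> = (deriv ^^ k) (\<lambda>t. c * ln t) \<theta> + (deriv ^^ k) g \<theta>"
      using \<theta> g[of \<theta>]
      by (intro higher_deriv_add_real has_holomorphic_extension_mult has_holomorphic_extension_const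
          has_holomorphic_extension_ln[OF has_holomorphic_extension_id]) auto
    also have "(deriv ^^ k) (\<lambda>t. c * ln t) \<theta> = c * (-1) ^ n * fact n / \<theta> ^ k"
      unfolding k by (rule higher_deriv_ln[OF \<theta>(1)])
    finally show "(deriv ^^ k) G \<theta> = c * (-1) ^ n * fact n / \<theta> ^ k + (deriv ^^ k) g \<theta>" .
  qed
qed

section \<open>The equation for \<open>u = 1 - 4\<lambda>\<close>\<close>

definition hseries :: "'a::{real_normed_field,banach} \<Rightarrow> 'a" where
  "hseries z = (\<Sum>n. z ^ n / of_nat (2 * n + 3))"

lemma hseries_sums:
  fixes z :: "'a::{real_normed_field,banach}"
  assumes "norm z < 1"
  shows "(\<lambda>n. z ^ n / of_nat (2 * n + 3)) sums hseries z"
proof -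
  have "norm (z ^ n / of_nat (2 * n + 3)) \<le> norm z ^ n" for n
  proof -
    have "norm (z ^ n / of_nat (2 * n + 3)) = norm z ^ n / of_nat (2 * n + 3)"
      by (simp only: norm_divide norm_power norm_of_nat)
    also have "\<dots> \<le> norm z ^ n"
      by (simp add: divide_le_eq mult_le_cancel_left1)
    finally show ?thesis .
  qed
  then have "summable (\<lambda>n. z ^ n / of_nat (2 * n + 3))"
    using assms by (intro summable_comparison_test[OF _ summable_geometric[of "norm z"]]) auto
  then show ?thesis unfolding hseries_def by (rule summable_sums)
qed

lemma hseries_of_real:
  assumes "\<bar>y\<bar> < 1"
  shows "hseries (complex_of_real y) = of_real (hseries y)"
proof -
  have "(\<lambda>n. of_real (y ^ n / of_nat (2 * n + 3))) sums complex_of_real (hseries y)"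
    using hseries_sums[of y] assms by (intro sums_of_real) simp
  moreover have "(\<lambda>n. of_real (y ^ n / of_nat (2 * n + 3))) sums hseries (complex_of_real y)"
    using hseries_sums[of "complex_of_real y"] assms by simp
  ultimately show ?thesis using sums_unique2 by metis
qed

lemma has_holomorphic_extension_hseries:
  fixes x :: real
  assumes "\<bar>x\<bar> < 1"
  shows "has_holomorphic_extension hseries x"
proof -
  have "hseries holomorphic_on ball 0 1"
  proof (rule power_series_holomorphic[where a="\<lambda>n. 1 / of_nat (2 * n + 3)"])
    fix w :: complex assume "w \<in> ball 0 1"
    then show "(\<lambda>n. 1 / of_nat (2 * n + 3) * (w - 0) ^ n) sums hseries w"
      using hseries_sums[of w] by simp
  qed
  moreover have "ball (complex_of_real x) (1 - \<bar>x\<bar>) \<subseteq> ball 0 1"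
    by (subst ball_subset_ball_iff) auto
  ultimately have "hseries holomorphic_on ball (complex_of_real x) (1 - \<bar>x\<bar>)"
    by (rule holomorphic_on_subset)
  moreover have "hseries (complex_of_real y) = of_real (hseries y)" if "\<bar>y - x\<bar> < 1 - \<bar>x\<bar>" for y
    using that by (intro hseries_of_real) linarith
  ultimately show ?thesis
    unfolding has_holomorphic_extension_def using assms by (intro exI[of _ "1 - \<bar>x\<bar>"]) auto
qed

lemma hseries_0: "hseries (0::real) = 1 / 3"
  unfolding hseries_def using powser_zero[of "\<lambda>n. 1 / real (2 * n + 3)"] by simp

lemma hseries_ge:
  fixes y :: real
  assumes "0 \<le> y" "y < 1"
  shows "1 / 3 \<le> hseries y"
proof -
  have "(\<Sum>n\<in>{0}. y ^ n / of_nat (2 * n + 3)) \<le> hseries y"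
    using hseries_sums[of y] assms unfolding hseries_def by (intro sum_le_suminf) (auto simp: sums_iff)
  then show ?thesis by simp
qed

lemma hseries_le:
  fixes y :: real
  assumes "0 \<le> y" "y < 1"
  shows "hseries y \<le> 1 / (3 * (1 - y))"
proof -
  have geom: "(\<lambda>n. y ^ n / 3) sums (1 / (1 - y) / 3)"
    using geometric_sums[of y] assms by (intro sums_divide) auto
  have "y ^ n / of_nat (2 * n + 3) \<le> y ^ n / 3" for n
    using assms by (intro divide_left_mono) auto
  moreover have "(\<lambda>n. y ^ n / of_nat (2 * n + 3)) sums hseries y"
    using assms by (intro hseries_sums) simp
  ultimately have "hseries y \<le> 1 / (1 - y) / 3"
    using geom by (rule sums_le)
  then show ?thesis by (simp add: mult.commute)
qed

lemma deriv_hseries_nonneg: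
  fixes y :: real
  assumes "0 \<le> y" "y < 1"
  shows "0 \<le> deriv hseries y"
proof -
  define c where "c n = 1 / real (2 * n + 3)" for n
  have hseries_eq: "hseries = (\<lambda>x. \<Sum>n. c n * x ^ n)"
    by (simp add: fun_eq_iff hseries_def c_def)
  have summable: "summable (\<lambda>n. c n * x ^ n)" if "\<bar>x\<bar> < 1" for x
    using hseries_sums[of x] that by (simp add: c_def sums_iff)
  have K: "\<bar>y\<bar> < (1 + y) / 2" "(1 + y) / 2 < 1" using assms by auto
  have "(hseries has_real_derivative (\<Sum>n. diffs c n * y ^ n)) (at y)"
    unfolding hseries_eq using K by (intro termdiffs_strong[OF summable[of "(1 + y) / 2"]]) auto
  then have "deriv hseries y = (\<Sum>n. diffs c n * y ^ n)"
    by (rule DERIV_imp_deriv)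
  also have "\<dots> \<ge> 0"
  proof (rule suminf_nonneg)
    show "summable (\<lambda>n. diffs c n * y ^ n)"
      by (rule termdiff_converges[of _ 1]) (use K summable in auto)
    show "0 \<le> diffs c n * y ^ n" for n
      using assms by (simp add: diffs_def c_def)
  qed
  finally show ?thesis .
qed

definition theta_of :: "real \<Rightarrow> real" where
  "theta_of u = u * hseries u"

lemma theta_of_0: "theta_of 0 = 0"
  by (simp add: theta_of_def)

lemma has_holomorphic_extension_theta_of: "\<bar>x\<bar> < 1 \<Longrightarrow> has_holomorphic_extension theta_of x"
  unfolding theta_of_def[abs_def]
  by (intro has_holomorphic_extension_mult has_holomorphic_extension_id has_holomorphic_extension_hseries)

lemma deriv_theta_of:
  assumes "\<bar>y\<bar> < 1"
  shows "deriv theta_of y = hseries y + y * deriv hseries y"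
proof -
  have "(hseries has_real_derivative deriv hseries y) (at y)"
    using assms by (intro has_holomorphic_extension_DERIV has_holomorphic_extension_hseries)
  then have "(theta_of has_real_derivative hseries y + y * deriv hseries y) (at y)"
    unfolding theta_of_def[abs_def] by (auto intro!: derivative_eq_intros)
  then show ?thesis by (rule DERIV_imp_deriv)
qed

lemma deriv_theta_of_0: "deriv theta_of 0 = 1 / 3"
  by (simp add: deriv_theta_of hseries_0)

lemma deriv_theta_of_ge:
  assumes "0 \<le> y" "y < 1"
  shows "1 / 3 \<le> deriv theta_of y"
  using deriv_theta_of[of y] assms hseries_ge[OF assms] deriv_hseries_nonneg[OF assms]
  by (simp add: add_increasing2)

lemma artanh_eq_hseries:
  fixes s :: real
  assumes "\<bar>s\<bar> < 1"
  shows "artanh s = s + s ^ 3 * hseries (s\<^sup>2)"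
proof -
  define t where "t n = (s ^ n - (-s) ^ n) / of_nat n" for n
  have "t = (\<lambda>n. s ^ n / of_nat n - (-s) ^ n / of_nat n)"
    by (simp add: fun_eq_iff t_def diff_divide_distrib)
  also have "\<dots> sums (ln (1 + s) - ln (1 - s))"
    using sums_diff[OF ln_series'[of s] ln_series'[of "-s"]] assms by simp
  also have "ln (1 + s) - ln (1 - s) = 2 * artanh s"
    using assms by (simp add: artanh_def ln_div abs_less_iff)
  finally have t_sums: "t sums (2 * artanh s)" .
  have "t n = 0" if "n \<notin> range (\<lambda>n. 2 * n + 1)" for n
  proof -
    have "even n" using that by (metis oddE rangeI)
    then show ?thesis by (simp add: t_def power_minus_even)
  qed
  then have "(\<lambda>n. t (2 * n + 1)) sums (2 * artanh s)"
    using t_sums by (subst sums_mono_reindex) (auto simp: strict_mono_def)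
  then have "(\<lambda>n. t (2 * Suc n + 1)) sums (2 * artanh s - 2 * s)"
    by (subst sums_Suc_iff) (simp add: t_def)
  moreover have "t (2 * Suc n + 1) = 2 * s ^ 3 * ((s\<^sup>2) ^ n / of_nat (2 * n + 3))" for n
  proof -
    define m where "m = 2 * Suc n + 1"
    have "odd m" by (simp add: m_def)
    then have "t m = 2 * s ^ m / of_nat m" by (simp add: t_def power_minus_odd)
    moreover have m: "m = 3 + 2 * n" by (simp add: m_def)
    then have "s ^ m = s ^ 3 * (s\<^sup>2) ^ n" by (simp only: power_add power_mult)
    ultimately show ?thesis unfolding m_def[symmetric] by (simp add: m add.commute)
  qed
  ultimately have "(\<lambda>n. 2 * s ^ 3 * ((s\<^sup>2) ^ n / of_nat (2 * n + 3))) sums (2 * artanh s - 2 * s)"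
    by simp
  moreover have "(\<lambda>n. 2 * s ^ 3 * ((s\<^sup>2) ^ n / of_nat (2 * n + 3))) sums (2 * s ^ 3 * hseries (s\<^sup>2))"
    using assms by (intro sums_mult hseries_sums) (simp add: abs_square_less_1)
  ultimately show ?thesis
    using sums_unique2 by fastforce
qed

lemma theta_of_artanh:
  fixes s :: real
  assumes "s \<noteq> 0" "\<bar>s\<bar> < 1"
  shows "artanh s / s - 1 = theta_of (s\<^sup>2)"
  using artanh_eq_hseries[OF assms(2)] assms(1)
  by (simp add: theta_of_def field_simps power2_eq_square power3_eq_cube)

lemma exists_theta_of_gt:
  assumes "\<theta> \<ge> 0"
  shows "\<exists>u. 0 < u \<and> u < 1 \<and> \<theta> < theta_of u"
proof -
  define s where "s = tanh (\<theta> + 2)"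
  have s: "0 < s" "s < 1" using assms by (auto simp: s_def tanh_real_lt_1)
  have "\<theta> < (\<theta> + 2) / s - 1"
    using s assms mult_left_le[of s \<theta>] by (simp add: field_simps)
  also have "\<dots> = theta_of (s\<^sup>2)"
    using theta_of_artanh[of s] s by (simp add: s_def artanh_tanh_real)
  finally show ?thesis
    using s by (intro exI[of _ "s\<^sup>2"]) (auto simp: power_less_one_iff)
qed

section \<open>Inverting \<open>\<theta> = u H(u)\<close>\<close>

definition jfactor :: "real \<Rightarrow> real" where
  "jfactor u = 1 / hseries u - 1 + u"

lemma has_holomorphic_extension_jfactor:
  "\<bar>x\<bar> < 1 \<Longrightarrow> hseries x \<noteq> 0 \<Longrightarrow> has_holomorphic_extension jfactor x"
  unfolding jfactor_def[abs_def]
  by (intro has_holomorphic_extension_add has_holomorphic_extension_diff has_holomorphic_extension_inverse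
      has_holomorphic_extension_hseries has_holomorphic_extension_const has_holomorphic_extension_id)

definition u_regular :: "real \<Rightarrow> bool" where
  "u_regular y \<longleftrightarrow> 0 < deriv theta_of y \<and> 0 < hseries y \<and> 0 < jfactor y"

lemma u_regular_nonneg:
  assumes "0 \<le> y" "y < 1"
  shows "u_regular y"
proof -
  have H: "0 < hseries y" using hseries_ge[OF assms] by simp
  have "3 * (1 - y) \<le> 1 / hseries y"
    using hseries_le[OF assms] H assms by (simp add: field_simps)
  then show ?thesis
    using H deriv_theta_of_ge[OF assms] assms by (simp add: u_regular_def jfactor_def)
qed

lemma u_regular_near_0: "\<forall>\<^sub>F y in nhds 0. u_regular y"
proof -
  have "isCont (deriv theta_of) 0" "isCont (hseries :: real \<Rightarrow> real) 0" "isCont jfactor 0"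
    by (simp_all add: has_holomorphic_extension_isCont has_holomorphic_extension_deriv
        has_holomorphic_extension_theta_of has_holomorphic_extension_hseries
        has_holomorphic_extension_jfactor hseries_0)
  then show ?thesis
    unfolding u_regular_def using u_regular_nonneg[of 0, unfolded u_regular_def]
    by (intro eventually_conj isCont_pos_eventually) auto
qed

(* On [0, 1) the conditions of u_regular hold outright (u_regular_nonneg); for u < 0 they are
   only known near 0, by continuity. u_of inverts theta_of on (-u_radius, 1). *)
definition u_radius :: real where
  "u_radius = (SOME r. 0 < r \<and> r < 1 \<and> (\<forall>y. -r < y \<and> y < 1 \<longrightarrow> u_regular y))"

lemma u_radius_spec: "0 < u_radius" "u_radius < 1" "-u_radius < y \<Longrightarrow> y < 1 \<Longrightarrow> u_regular y"
proof -
  obtain d where d: "0 < d" "\<And>y. dist y 0 < d \<Longrightarrow> u_regular y"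
    using u_regular_near_0 unfolding eventually_nhds_metric by blast
  have "\<exists>r. 0 < r \<and> r < 1 \<and> (\<forall>y. -r < y \<and> y < 1 \<longrightarrow> u_regular y)"
  proof (intro exI[of _ "min d (1/2)"] conjI allI impI)
    fix y assume "- min d (1/2) < y \<and> y < 1"
    then show "u_regular y"
      using d(2)[of y] u_regular_nonneg[of y] by (cases "0 \<le> y") (auto simp: dist_real_def)
  qed (use d in auto)
  then have "0 < u_radius \<and> u_radius < 1 \<and> (\<forall>y. -u_radius < y \<and> y < 1 \<longrightarrow> u_regular y)"
    unfolding u_radius_def by (rule someI_ex)
  then show "0 < u_radius" "u_radius < 1" "-u_radius < y \<Longrightarrow> y < 1 \<Longrightarrow> u_regular y"
    by auto
qed

lemma theta_of_strict_mono:
  assumes "-u_radius < a" "a < b" "b < 1"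
  shows "theta_of a < theta_of b"
proof (rule DERIV_pos_imp_increasing[OF assms(2)])
  fix x assume "a \<le> x" "x \<le> b"
  then have x: "-u_radius < x" "x < 1" using assms by auto
  then have "\<bar>x\<bar> < 1" using u_radius_spec(2) by auto
  then show "\<exists>y. (theta_of has_real_derivative y) (at x) \<and> 0 < y"
    using has_holomorphic_extension_DERIV[OF has_holomorphic_extension_theta_of] u_radius_spec(3)[OF x]
    by (auto simp: u_regular_def)
qed

lemma theta_of_inj:
  assumes "-u_radius < a" "a < 1" "-u_radius < b" "b < 1" "theta_of a = theta_of b"
  shows "a = b"
  using theta_of_strict_mono assms by (metis less_irrefl linorder_neqE_linordered_idom)

definition theta_margin :: real where
  "theta_margin = - theta_of (- u_radius / 2)"

lemma theta_margin_pos: "0 < theta_margin"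
  using theta_of_strict_mono[of "- u_radius / 2" 0] u_radius_spec(1,2)
  by (simp add: theta_margin_def theta_of_0)

definition u_of :: "real \<Rightarrow> real" where
  "u_of \<theta> = (THE u. -u_radius < u \<and> u < 1 \<and> theta_of u = \<theta>)"

lemma u_of_spec:
  assumes "-theta_margin < \<theta>"
  shows "-u_radius < u_of \<theta>" "u_of \<theta> < 1" "theta_of (u_of \<theta>) = \<theta>"
proof -
  obtain b where b: "0 < b" "b < 1" "max \<theta> 0 < theta_of b"
    using exists_theta_of_gt[of "max \<theta> 0"] by auto
  have "continuous_on {- u_radius / 2..b} theta_of"
    using u_radius_spec(1,2) b
    by (intro continuous_at_imp_continuous_on ballI has_holomorphic_extension_isCont
        has_holomorphic_extension_theta_of) auto
  then obtain u where "- u_radius / 2 \<le> u" "u \<le> b" "theta_of u = \<theta>"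
    using IVT'[of theta_of "- u_radius / 2" \<theta> b] assms b u_radius_spec(1) by (auto simp: theta_margin_def)
  then have "\<exists>!u. -u_radius < u \<and> u < 1 \<and> theta_of u = \<theta>"
    using b u_radius_spec(1) theta_of_inj by (intro ex1I[of _ u]) auto
  then have "-u_radius < u_of \<theta> \<and> u_of \<theta> < 1 \<and> theta_of (u_of \<theta>) = \<theta>"
    unfolding u_of_def by (rule theI')
  then show "-u_radius < u_of \<theta>" "u_of \<theta> < 1" "theta_of (u_of \<theta>) = \<theta>"
    by auto
qed

lemma u_of_theta_of:
  assumes "-u_radius < u" "u < 1"
  shows "u_of (theta_of u) = u"
  unfolding u_of_def using assms theta_of_inj by (intro the_equality) auto

lemma u_of_0: "u_of 0 = 0"
  using u_of_theta_of[of 0] u_radius_spec(1) by (simp add: theta_of_0)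

lemma u_of_pos:
  assumes "0 < \<theta>"
  shows "0 < u_of \<theta>"
proof (rule ccontr)
  assume "\<not> 0 < u_of \<theta>"
  moreover have "-u_radius < u_of \<theta>" "theta_of (u_of \<theta>) = \<theta>"
    using u_of_spec[of \<theta>] assms theta_margin_pos by auto
  ultimately have "\<theta> \<le> theta_of 0"
    using theta_of_strict_mono[of "u_of \<theta>" 0] by (cases "u_of \<theta> = 0") auto
  then show False using assms by (simp add: theta_of_0)
qed

lemma has_holomorphic_extension_u_of:
  assumes "-theta_margin < \<theta>"
  shows "has_holomorphic_extension u_of \<theta>"
proof -
  define u where "u = u_of \<theta>"
  have u: "-u_radius < u" "u < 1" "theta_of u = \<theta>"
    using u_of_spec[OF assms] by (auto simp: u_def)
  define d where "d = min ((u + u_radius) / 2) ((1 - u) / 2)"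
  have d: "0 < d" using u by (simp add: d_def)
  have near: "-u_radius < z \<and> z < 1" if "\<bar>z - u\<bar> \<le> d" for z
  proof -
    have "z - u \<le> d" "u - z \<le> d" using that by auto
    moreover have "d \<le> (u + u_radius) / 2" "d \<le> (1 - u) / 2" unfolding d_def by linarith+
    ultimately show ?thesis using u(1,2) by auto
  qed
  have cont: "isCont u_of (theta_of u)"
  proof (rule isCont_inverse_function[where f=theta_of and x=u, OF d])
    fix z assume "\<bar>z - u\<bar> \<le> d"
    then show "u_of (theta_of z) = z" using near u_of_theta_of by blast
  next
    fix z assume "\<bar>z - u\<bar> \<le> d"
    then have "\<bar>z\<bar> < 1" using near[of z] u_radius_spec(2) by auto
    then show "isCont theta_of z"
      by (intro has_holomorphic_extension_isCont has_holomorphic_extension_theta_of)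
  qed
  have "has_holomorphic_extension u_of (theta_of u)"
  proof (rule has_holomorphic_extension_inverse_fun[where g=theta_of and x=u, OF _ _ cont])
    show "has_holomorphic_extension theta_of u"
      using u u_radius_spec(2) by (intro has_holomorphic_extension_theta_of) auto
    show "deriv theta_of u \<noteq> 0" using u_radius_spec(3)[OF u(1,2)] by (simp add: u_regular_def)
    show "u_of (theta_of u) = u" using u_of_theta_of[OF u(1,2)] .
    show "0 < \<theta> + theta_margin" using assms by simp
    show "theta_of (u_of y) = y" if "\<bar>y - theta_of u\<bar> < \<theta> + theta_margin" for y
      using that u(3) u_of_spec(3)[of y] by auto
  qed
  then show ?thesis using u(3) by simp
qed

lemma DERIV_u_of_0: "(u_of has_real_derivative 3) (at 0)"
proof -
  have u_of': "(u_of has_real_derivative deriv u_of 0) (at 0)"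
    using theta_margin_pos by (intro has_holomorphic_extension_DERIV has_holomorphic_extension_u_of) simp
  then have chain: "((\<lambda>t. theta_of (u_of t)) has_real_derivative deriv theta_of 0 * deriv u_of 0) (at 0)"
    using has_holomorphic_extension_DERIV[OF has_holomorphic_extension_theta_of, of 0]
    by (intro DERIV_chain2) (auto simp: u_of_0)
  have "\<forall>\<^sub>F t in nhds 0. t \<in> {-theta_margin<..}"
    using theta_margin_pos by (intro eventually_nhds_in_open) auto
  then have "\<forall>\<^sub>F t in nhds 0. theta_of (u_of t) = t"
    by (rule eventually_mono) (simp add: u_of_spec(3))
  from iffD1[OF DERIV_cong_ev[OF refl this refl] chain]
  have "((\<lambda>t. t) has_real_derivative deriv theta_of 0 * deriv u_of 0) (at 0)" .
  then have "deriv theta_of 0 * deriv u_of 0 = 1"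
    using DERIV_ident DERIV_unique by blast
  then show ?thesis using u_of' by (simp add: deriv_theta_of_0)
qed

section \<open>The analytic parts of \<open>f\<close> and \<open>j\<close>\<close>

definition f0 :: "real \<Rightarrow> real" where
  "f0 \<theta> = ln 4 - ln (1 - u_of \<theta>) - 2 * \<theta> + \<theta> * ln (hseries (u_of \<theta>))"

definition j0 :: "real \<Rightarrow> real" where
  "j0 \<theta> = - (1/2) * ln (jfactor (u_of \<theta>)) + (1/2) * ln 2"

lemma u_of_regular:
  assumes "-theta_margin < \<theta>"
  shows "\<bar>u_of \<theta>\<bar> < 1" "u_of \<theta> < 1" "0 < hseries (u_of \<theta>)" "0 < jfactor (u_of \<theta>)"
  using u_of_spec[OF assms] u_radius_spec(2) u_radius_spec(3)[of "u_of \<theta>"] by (auto simp: u_regular_def)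

lemma has_holomorphic_extension_f0:
  assumes "-theta_margin < \<theta>"
  shows "has_holomorphic_extension f0 \<theta>"
proof -
  have u: "has_holomorphic_extension u_of \<theta>"
    using assms by (rule has_holomorphic_extension_u_of)
  have "has_holomorphic_extension (\<lambda>t. hseries (u_of t)) \<theta>"
    using u_of_regular[OF assms]
    by (intro has_holomorphic_extension_compose[OF u] has_holomorphic_extension_hseries)
  then show ?thesis
    unfolding f0_def[abs_def] using u_of_regular[OF assms]
    by (intro has_holomorphic_extension_add has_holomorphic_extension_diff has_holomorphic_extension_mult
        has_holomorphic_extension_ln has_holomorphic_extension_const has_holomorphic_extension_id u) auto
qed

lemma has_holomorphic_extension_j0:
  assumes "-theta_margin < \<theta>"
  shows "has_holomorphic_extension j0 \<theta>"
proof -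
  have "has_holomorphic_extension (\<lambda>t. jfactor (u_of t)) \<theta>"
    using u_of_regular[OF assms]
    by (intro has_holomorphic_extension_compose[OF has_holomorphic_extension_u_of[OF assms]]
        has_holomorphic_extension_jfactor) auto
  then show ?thesis
    unfolding j0_def[abs_def] using u_of_regular[OF assms]
    by (intro has_holomorphic_extension_add has_holomorphic_extension_mult has_holomorphic_extension_ln
        has_holomorphic_extension_const)
qed

lemma f0_0: "f0 0 = ln 4"
  by (simp add: f0_def u_of_0)

lemma j0_0: "j0 0 = 0"
  by (simp add: j0_def u_of_0 jfactor_def hseries_0)

lemma deriv_f0_0: "deriv f0 0 = 1 - ln 3"
proof -
  define L where "L t = ln (hseries (u_of t))" for t
  have "has_holomorphic_extension L 0"
    unfolding L_def using u_of_regular[of 0] theta_margin_pos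
    by (intro has_holomorphic_extension_ln has_holomorphic_extension_compose[OF has_holomorphic_extension_u_of]
        has_holomorphic_extension_hseries) auto
  then have L: "(L has_real_derivative deriv L 0) (at 0)"
    by (rule has_holomorphic_extension_DERIV)
  have U: "((\<lambda>t. ln (1 - u_of t)) has_real_derivative -3) (at 0)"
    by (auto intro!: derivative_eq_intros DERIV_u_of_0 simp: u_of_0)
  have f0_eq: "f0 = (\<lambda>t. ln 4 - ln (1 - u_of t) - 2 * t + t * L t)"
    by (simp add: fun_eq_iff f0_def L_def)
  have "(f0 has_real_derivative 0 - (-3) - 2 * 1 + (1 * L 0 + deriv L 0 * 0)) (at 0)"
    unfolding f0_eq by (intro DERIV_add DERIV_diff DERIV_const U DERIV_cmult DERIV_mult DERIV_ident L)
  then have "(f0 has_real_derivative 1 - ln 3) (at 0)"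
    by (simp add: L_def u_of_0 hseries_0 ln_div)
  then show ?thesis by (rule DERIV_imp_deriv)
qed

lemma lam_eq_u_of:
  assumes "0 < \<theta>"
  shows "lam \<theta> = (1 - u_of \<theta>) / 4"
proof -
  define u where "u = u_of \<theta>"
  have u: "0 < u" "u < 1" "theta_of u = \<theta>"
    using u_of_pos[OF assms] u_of_spec[of \<theta>] assms theta_margin_pos by (auto simp: u_def)
  have "(THE l. 0 < l \<and> l < 1/4 \<and> -1 + artanh (sqrt (1 - 4*l)) / sqrt (1 - 4*l) = \<theta>) = (1 - u) / 4"
  proof (rule the_equality)
    have "1 - 4 * ((1 - u) / 4) = u" by (simp add: field_simps)
    moreover have "-1 + artanh (sqrt u) / sqrt u = \<theta>"
      using theta_of_artanh[of "sqrt u"] u by simp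
    ultimately show "0 < (1 - u) / 4 \<and> (1 - u) / 4 < 1/4 \<and>
        -1 + artanh (sqrt (1 - 4 * ((1 - u) / 4))) / sqrt (1 - 4 * ((1 - u) / 4)) = \<theta>"
      using u by (simp only:) simp
  next
    fix l assume l: "0 < l \<and> l < 1/4 \<and> -1 + artanh (sqrt (1 - 4*l)) / sqrt (1 - 4*l) = \<theta>"
    define v where "v = 1 - 4 * l"
    have v: "0 < v" "v < 1" using l by (auto simp: v_def)
    have "theta_of v = -1 + artanh (sqrt v) / sqrt v"
      using theta_of_artanh[of "sqrt v"] v by simp
    also have "\<dots> = \<theta>" using l by (simp add: v_def)
    finally have "u = v"
      using u_of_theta_of[of v] v u_radius_spec(1) by (auto simp: u_def)
    then show "l = (1 - u) / 4" by (simp add: v_def)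
  qed
  then show ?thesis using assms by (simp add: lam_def u_def)
qed

lemma fF_eq_f0:
  assumes "0 < \<theta>"
  shows "fF \<theta> = - \<theta> * ln \<theta> + f0 \<theta>"
proof -
  define u where "u = u_of \<theta>"
  have u: "0 < u" "u < 1" "\<theta> = u * hseries u" "0 < hseries u"
    using u_of_pos[OF assms] u_of_spec[of \<theta>] u_of_regular[of \<theta>] assms theta_margin_pos
    by (auto simp: u_def theta_of_def)
  have c: "1 - 4 * ((1 - u) / 4) = u" by (simp add: field_simps)
  have "ln \<theta> = ln u + ln (hseries u)"
    using u by (simp add: ln_mult)
  moreover have "ln ((1 - u) / 4) = ln (1 - u) - ln 4"
    using u by (simp add: ln_div)
  moreover have "fF \<theta> = - ln ((1 - u) / 4) - 2 * \<theta> - \<theta> * ln u"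
    unfolding fF_def lam_eq_u_of[OF assms] u_def[symmetric] c ..
  ultimately show ?thesis
    unfolding f0_def u_def[symmetric] by (simp add: algebra_simps)
qed

lemma jF_eq_j0:
  assumes "0 < \<theta>"
  shows "jF \<theta> = - (1/2) * ln \<theta> + j0 \<theta>"
proof -
  define u where "u = u_of \<theta>"
  have u: "\<theta> = u * hseries u" "0 < hseries u" "0 < jfactor u"
    using u_of_spec[of \<theta>] u_of_regular[of \<theta>] assms theta_margin_pos
    by (auto simp: u_def theta_of_def)
  have "1 - 4 * (\<theta> + 1) * ((1 - u) / 4) = \<theta> * jfactor u"
    using u(2) unfolding jfactor_def u(1) by (simp add: field_simps)
  then have "jF \<theta> = - (1/2) * ln (\<theta> * jfactor u) + (1/2) * ln 2"
    by (simp add: jF_def lam_eq_u_of[OF assms] flip: u_def)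
  also have "\<dots> = - (1/2) * ln \<theta> + j0 \<theta>"
    using assms u(3) by (simp add: ln_mult j0_def algebra_simps flip: u_def)
  finally show ?thesis .
qed

lemma deriv_fF:
  assumes "0 < \<theta>"
  shows "deriv fF \<theta> = -1 * ln \<theta> + (deriv f0 \<theta> - 1)"
proof -
  have "\<forall>\<^sub>F t in nhds \<theta>. t \<in> {0<..}"
    using assms by (intro eventually_nhds_in_open) auto
  then have "\<forall>\<^sub>F t in nhds \<theta>. fF t = - t * ln t + f0 t"
    by (rule eventually_mono) (simp add: fF_eq_f0)
  then have "deriv fF \<theta> = deriv (\<lambda>t. - t * ln t + f0 t) \<theta>"
    by (rule deriv_cong_ev) simp
  also have "\<dots> = - ln \<theta> - 1 + deriv f0 \<theta>"
    using assms theta_margin_pos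
    by (intro DERIV_imp_deriv)
       (auto intro!: derivative_eq_intros has_holomorphic_extension_DERIV has_holomorphic_extension_f0)
  finally show ?thesis by simp
qed

theorem proposition5:
  shows "\<exists>f0 j0 :: real \<Rightarrow> real. \<exists>\<epsilon>>0.
     real_analytic_on f0 {-\<epsilon><..} \<and> real_analytic_on j0 {-\<epsilon><..} \<and>
     (\<forall>\<theta>>0. fF \<theta> = - \<theta> * ln \<theta> + f0 \<theta>) \<and>
     (\<forall>\<theta>>0. jF \<theta> = - (1/2) * ln \<theta> + j0 \<theta>) \<and>
     f0 0 = ln 4 \<and> exp (deriv f0 0) = exp 1 / 3 \<and> j0 0 = 0 \<and>
     (\<forall>k::nat. k \<ge> 1 \<longrightarrow>
        (deriv ^^ (k+1)) fF \<in> O[at_right (0::real)](\<lambda>\<theta>. 1 / \<theta> ^ k) \<and>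
        (deriv ^^ k) jF \<in> O[at_right (0::real)](\<lambda>\<theta>. 1 / \<theta> ^ k))"
proof (rule exI[of _ f0], rule exI[of _ j0], rule exI[of _ theta_margin], intro conjI allI impI)
  have f0: "has_holomorphic_extension f0 \<theta>" and j0: "has_holomorphic_extension j0 \<theta>"
    if "0 \<le> \<theta>" for \<theta>
    using that theta_margin_pos by (auto intro: has_holomorphic_extension_f0 has_holomorphic_extension_j0)
  show "real_analytic_on f0 {-theta_margin<..}"
    by (auto intro: has_holomorphic_extension_imp_real_analytic has_holomorphic_extension_f0)
  show "real_analytic_on j0 {-theta_margin<..}"
    by (auto intro: has_holomorphic_extension_imp_real_analytic has_holomorphic_extension_j0)
  show "exp (deriv f0 0) = exp 1 / 3"
    by (simp add: deriv_f0_0 exp_diff)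
  fix k :: nat assume "1 \<le> k"
  have "(deriv ^^ k) (deriv fF) \<in> O[at_right 0](\<lambda>\<theta>. 1 / \<theta> ^ k)"
    using deriv_fF f0 \<open>1 \<le> k\<close>
    by (intro higher_deriv_log_singularity_bigo[where g="\<lambda>\<theta>. deriv f0 \<theta> - 1"]
        has_holomorphic_extension_diff has_holomorphic_extension_deriv has_holomorphic_extension_const)
  then show "(deriv ^^ (k + 1)) fF \<in> O[at_right 0](\<lambda>\<theta>. 1 / \<theta> ^ k)"
    by (simp add: funpow_Suc_right del: funpow.simps)
  show "(deriv ^^ k) jF \<in> O[at_right 0](\<lambda>\<theta>. 1 / \<theta> ^ k)"
    using jF_eq_j0 j0 \<open>1 \<le> k\<close> by (rule higher_deriv_log_singularity_bigo)
qed (use theta_margin_pos fF_eq_f0 jF_eq_j0 f0_0 j0_0 in auto)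

end
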